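(* Let $G$ be a finite abelian group of size $N$, let $\epsilon > 0$, $f:G\rightarrow \mathbb{R}$, and let $A\subseteq G$ have size $\alpha N$. Suppose that $B$ is a Bohr set in $G$ such that for every $t\in B$ \[\|f*1_A(\cdot + t) - f*1_A\|_{\infty} \leq \epsilon.\] Further assume that $\|f\|_1\leq 1/(2\alpha)$ and $f*1_A(0)\geq 1-\epsilon$. Then there exists $x\in G$ such that $B\cap (x+A)$ has density at least $2\alpha(1-2\epsilon)$ inside $B$, i.e. $|B\cap(x+A)|\geq 2\alpha(1-2\epsilon)|B|$.
   Context: For $\Gamma\subseteq\widehat{G}$ (the group of characters of $G$) and $0<\rho\leq 2$, the Bohr set $\mathrm{Bohr}(\Gamma,\rho)=\{x\in G: |1-\gamma(x)|\leq\rho \text{ for all }\gamma\in\Gamma\}$. Convolution: $f*g(x)=\sum_{t\in G}f(t)g(x-t)$. $\|f\|_1=\sum_{x}|f(x)|$, $\|f\|_\infty=\max_x|f(x)|$. *)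

theory Defs
  imports "HOL-Analysis.Analysis"
begin

definition character :: "('a::ab_group_add \<Rightarrow> complex) \<Rightarrow> bool" where
  "character \<gamma> \<longleftrightarrow> (\<forall>x y. \<gamma> (x + y) = \<gamma> x * \<gamma> y) \<and> (\<forall>x. norm (\<gamma> x) = 1)"

definition Bohr :: "('a::ab_group_add \<Rightarrow> complex) set \<Rightarrow> real \<Rightarrow> 'a set" where
  "Bohr \<Gamma> \<rho> = {x. \<forall>\<gamma>\<in>\<Gamma>. norm (1 - \<gamma> x) \<le> \<rho>}"

definition is_Bohr_set :: "'a::ab_group_add set \<Rightarrow> bool" where
  "is_Bohr_set B \<longleftrightarrow> (\<exists>\<Gamma> \<rho>. \<Gamma> \<subseteq> {\<gamma>. character \<gamma>} \<and> 0 < \<rho> \<and> \<rho> \<le> 2 \<and> B = Bohr \<Gamma> \<rho>)"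

definition conv :: "('a::{ab_group_add,finite} \<Rightarrow> real) \<Rightarrow> ('a \<Rightarrow> real) \<Rightarrow> 'a \<Rightarrow> real" where
  "conv f g x = (\<Sum>t\<in>UNIV. f t * g (x - t))"

definition l1norm :: "('a::finite \<Rightarrow> real) \<Rightarrow> real" where
  "l1norm f = (\<Sum>x\<in>UNIV. \<bar>f x\<bar>)"

definition linfnorm :: "('a::finite \<Rightarrow> real) \<Rightarrow> real" where
  "linfnorm f = Max (range (\<lambda>x. \<bar>f x\<bar>))"

end

theory Submission
  imports Defs
begin

text \<open>Averaging \<open>f * 1\<^sub>A\<close> over \<open>B\<close> and swapping the sums gives
  \<open>\<Sum>\<^sub>t\<^sub>\<in>\<^sub>B f * 1\<^sub>A(t) = \<Sum>\<^sub>s f(s) |B \<inter> (s + A)| \<le> \<parallel>f\<parallel>\<^sub>1 max\<^sub>x |B \<inter> (x + A)|\<close>.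
  The almost-invariance of \<open>f * 1\<^sub>A\<close> under shifts by \<open>B\<close> and the value at \<open>0\<close> bound the
  left-hand side below by \<open>(1 - 2\<epsilon>)|B|\<close>, and \<open>\<parallel>f\<parallel>\<^sub>1 \<le> 1/(2\<alpha>)\<close> finishes the proof.
  Only these inequalities are used: \<open>B\<close> may be any subset of \<open>G\<close>.\<close>

lemma abs_le_linfnorm: "\<bar>g x\<bar> \<le> linfnorm g"
  unfolding linfnorm_def by (rule Max_ge) auto

lemma sum_indicator_diff_eq_card_translate:
  fixes A B :: "'a::ab_group_add set"
  assumes "finite B"
  shows "(\<Sum>t\<in>B. indicator A (t - s) :: real) = real (card (B \<inter> (\<lambda>a. s + a) ` A))"
proof -
  have "(\<Sum>t\<in>B. indicator A (t - s) :: real) = (\<Sum>t\<in>B. indicator ((\<lambda>a. s + a) ` A) t)"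
  proof (rule sum.cong)
    fix t
    have "t - s \<in> A \<longleftrightarrow> t \<in> (\<lambda>a. s + a) ` A"
      by (auto simp: image_iff intro!: bexI[of _ "t - s"])
    then show "(indicator A (t - s) :: real) = indicator ((\<lambda>a. s + a) ` A) t"
      by (simp add: indicator_def)
  qed simp
  also have "\<dots> = real (card (B \<inter> (\<lambda>a. s + a) ` A))"
    using assms by (simp add: indicator_def sum.If_cases Int_def)
  finally show ?thesis .
qed

lemma sum_conv_indicator:
  fixes f :: "'a::{ab_group_add,finite} \<Rightarrow> real"
  shows "(\<Sum>t\<in>B. conv f (indicator A) t) = (\<Sum>s\<in>UNIV. f s * real (card (B \<inter> (\<lambda>a. s + a) ` A)))"
proof -
  have "(\<Sum>t\<in>B. conv f (indicator A) t) = (\<Sum>s\<in>UNIV. \<Sum>t\<in>B. f s * indicator A (t - s))"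
    unfolding conv_def by (rule sum.swap)
  also have "\<dots> = (\<Sum>s\<in>UNIV. f s * (\<Sum>t\<in>B. indicator A (t - s)))"
    by (simp only: sum_distrib_left)
  finally show ?thesis
    by (simp only: sum_indicator_diff_eq_card_translate[OF finite])
qed

lemma sum_mult_le_l1norm_mult:
  fixes f c :: "'a::finite \<Rightarrow> real"
  assumes "\<And>s. 0 \<le> c s" and "\<And>s. c s \<le> M"
  shows "(\<Sum>s\<in>UNIV. f s * c s) \<le> l1norm f * M"
proof -
  have "(\<Sum>s\<in>UNIV. f s * c s) \<le> (\<Sum>s\<in>UNIV. \<bar>f s\<bar> * M)"
  proof (rule sum_mono)
    fix s
    have "f s * c s \<le> \<bar>f s\<bar> * c s" using assms(1) by (simp add: mult_right_mono)
    also have "\<dots> \<le> \<bar>f s\<bar> * M" using assms(2) by (simp add: mult_left_mono)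
    finally show "f s * c s \<le> \<bar>f s\<bar> * M" .
  qed
  then show ?thesis unfolding l1norm_def by (simp add: sum_distrib_right)
qed

lemma exists_translate_intersection_ge:
  fixes f :: "'a::{ab_group_add,finite} \<Rightarrow> real"
  assumes "\<And>t. t \<in> B \<Longrightarrow> \<delta> \<le> conv f (indicator A) t"
  shows "\<exists>x. \<delta> * real (card B) \<le> l1norm f * real (card (B \<inter> (\<lambda>a. x + a) ` A))"
proof -
  define c where "c s = real (card (B \<inter> (\<lambda>a. s + a) ` A))" for s
  have "Max (range c) \<in> range c" by (rule Max_in) auto
  then obtain x where "c x = Max (range c)" by (metis imageE)
  then have c_le: "c s \<le> c x" for s by simp
  have "\<delta> * real (card B) \<le> (\<Sum>t\<in>B. conv f (indicator A) t)"
    using sum_mono[of B "\<lambda>_. \<delta>"] assms by (simp add: mult.commute)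
  also have "\<dots> = (\<Sum>s\<in>UNIV. f s * c s)"
    unfolding c_def by (rule sum_conv_indicator)
  also have "\<dots> \<le> l1norm f * c x"
    by (rule sum_mult_le_l1norm_mult[OF _ c_le]) (simp add: c_def)
  finally show ?thesis unfolding c_def by blast
qed

theorem lemma1:
  fixes f :: "'a::{ab_group_add,finite} \<Rightarrow> real"
    and A B :: "'a set" and \<epsilon> \<alpha> :: real
  assumes "\<epsilon> > 0"
    and "\<alpha> = real (card A) / real CARD('a)"
    and "is_Bohr_set B"
    and "\<forall>t\<in>B. linfnorm (\<lambda>x. conv f (indicator A) (x + t) - conv f (indicator A) x) \<le> \<epsilon>"
    and "l1norm f \<le> 1 / (2 * \<alpha>)"
    and "conv f (indicator A) 0 \<ge> 1 - \<epsilon>"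
  shows "\<exists>x. real (card (B \<inter> (\<lambda>a. x + a) ` A)) \<ge> 2 * \<alpha> * (1 - 2 * \<epsilon>) * real (card B)"
proof -
  let ?F = "conv f (indicator A)"
  have "1 - 2 * \<epsilon> \<le> ?F t" if "t \<in> B" for t
    using abs_le_linfnorm[of "\<lambda>x. ?F (x + t) - ?F x" 0] assms(4,6) that by auto
  then obtain x where x: "(1 - 2 * \<epsilon>) * real (card B) \<le> l1norm f * real (card (B \<inter> (\<lambda>a. x + a) ` A))"
    using exists_translate_intersection_ge by blast
  define c where "c = real (card (B \<inter> (\<lambda>a. x + a) ` A))"
  show ?thesis
  proof (cases "\<alpha> > 0")
    case True
    have "l1norm f * c \<le> c / (2 * \<alpha>)"
      using mult_right_mono[OF assms(5), of c] by (simp add: c_def)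
    with x have "(1 - 2 * \<epsilon>) * real (card B) \<le> c / (2 * \<alpha>)"
      unfolding c_def[symmetric] by linarith
    with True have "2 * \<alpha> * (1 - 2 * \<epsilon>) * real (card B) \<le> c"
      by (simp add: pos_le_divide_eq mult_ac)
    then show ?thesis unfolding c_def by blast
  next
    case False
    moreover have "\<alpha> \<ge> 0" using assms(2) by simp
    ultimately have "\<alpha> = 0" by linarith
    then show ?thesis by simp
  qed
qed

end
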